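(* Assume $\beta_\Omega>1$ and fix $\lambda>0$ and $\tau$ with $\frac{1}{\beta_\Omega}<\tau<1$. Then there exists $\varepsilon_0>0$ such that for each $\varepsilon\in(0,\varepsilon_0]$ there is $\delta_1>0$ with the property that for every $0<\delta\le\delta_1$ the function $\psi(x)=\delta(\phi_\Omega(x)+\varepsilon)^\tau$, $x\in\overline{\Omega}$, is a supersolution of (P), i.e. $-\Delta\psi\ge\psi-\psi^p$ in $\Omega$ and $\frac{\partial\psi}{\partial\nu}\ge-\lambda\psi^q$ on $\partial\Omega$.
   Context: $\Omega\subset\mathbb{R}^N$ is a bounded domain with smooth boundary $\partial\Omega$, $\nu$ the unit outer normal, $0<q<1<p$. Problem (P): $-\Delta u=u-u^p$ in $\Omega$, $u\ge0$, $\frac{\partial u}{\partial\nu}=-\lambda u^q$ on $\partial\Omega$. $\beta_\Omega$ is the smallest Dirichlet eigenvalue of $-\Delta$ in $\Omega$ and $\phi_\Omega\in C^{2+\theta}(\overline{\Omega})$ a fixed associated eigenfunction with $\phi_\Omega>0$ in $\Omega$, $\phi_\Omega=0$ on $\partial\Omega$ (so $-\partial\phi_\Omega/\partial\nu$ is bounded between positive constants on $\partial\Omega$). *)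

theory Defs
  imports "HOL-Analysis.Analysis"
begin

definition partial :: "'n::finite \<Rightarrow> (real^'n \<Rightarrow> real) \<Rightarrow> real^'n \<Rightarrow> real" where
  "partial i f x = deriv (\<lambda>t. f (x + t *\<^sub>R axis i 1)) 0"

fun ipartial :: "'n::finite list \<Rightarrow> (real^'n \<Rightarrow> real) \<Rightarrow> real^'n \<Rightarrow> real" where
  "ipartial [] f = f"
| "ipartial (i # is) f = partial i (ipartial is f)"

definition has_partial_at :: "'n::finite \<Rightarrow> (real^'n \<Rightarrow> real) \<Rightarrow> real^'n \<Rightarrow> bool" where
  "has_partial_at i f x \<longleftrightarrow> (\<lambda>t. f (x + t *\<^sub>R axis i 1)) field_differentiable (at 0)"

definition grad :: "(real^'n::finite \<Rightarrow> real) \<Rightarrow> real^'n \<Rightarrow> real^'n" where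
  "grad f x = (\<chi> i. partial i f x)"

definition laplacian :: "(real^'n::finite \<Rightarrow> real) \<Rightarrow> real^'n \<Rightarrow> real" where
  "laplacian f x = (\<Sum>i\<in>UNIV. partial i (partial i f) x)"

definition smooth_everywhere :: "(real^'n::finite \<Rightarrow> real) \<Rightarrow> bool" where
  "smooth_everywhere f \<longleftrightarrow>
     (\<forall>is. continuous_on UNIV (ipartial is f) \<and> (\<forall>i x. has_partial_at i (ipartial is f) x))"

definition C2_on :: "(real^'n::finite) set \<Rightarrow> (real^'n \<Rightarrow> real) \<Rightarrow> bool" where
  "C2_on U f \<longleftrightarrow> continuous_on U f \<and>
     (\<forall>i. \<forall>x\<in>U. has_partial_at i f x) \<and> (\<forall>i. continuous_on U (partial i f)) \<and>
     (\<forall>i j. \<forall>x\<in>U. has_partial_at j (partial i f) x) \<and>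
     (\<forall>i j. continuous_on U (partial j (partial i f)))"

text \<open>C^{2+theta}(closure Omega): C^2 in Omega, continuous on the closure, first derivatives
  extend continuously to the closure, second derivatives uniformly theta-Hoelder on Omega.\<close>
definition C2_theta_closure :: "real \<Rightarrow> (real^'n::finite) set \<Rightarrow> (real^'n \<Rightarrow> real) \<Rightarrow> bool" where
  "C2_theta_closure \<theta> \<Omega> f \<longleftrightarrow> C2_on \<Omega> f \<and> continuous_on (closure \<Omega>) f \<and>
     (\<forall>i. uniformly_continuous_on \<Omega> (partial i f)) \<and>
     (\<forall>i j. \<exists>C. \<forall>x\<in>\<Omega>. \<forall>y\<in>\<Omega>.
        \<bar>partial j (partial i f) x - partial j (partial i f) y\<bar> \<le> C * dist x y powr \<theta>)"

text \<open>Bounded domain with smooth boundary, described by a global smooth defining function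
  rho (Omega = {rho < 0}, grad rho \<noteq> 0 on {rho = 0}); nu is the unit outer normal.\<close>
definition smooth_domain :: "(real^'n::finite) set \<Rightarrow> (real^'n \<Rightarrow> real^'n) \<Rightarrow> bool" where
  "smooth_domain \<Omega> \<nu> \<longleftrightarrow> open \<Omega> \<and> connected \<Omega> \<and> bounded \<Omega> \<and> \<Omega> \<noteq> {} \<and>
     (\<exists>\<rho>. smooth_everywhere \<rho> \<and> \<Omega> = {x. \<rho> x < 0} \<and>
        (\<forall>x. \<rho> x = 0 \<longrightarrow> grad \<rho> x \<noteq> 0) \<and>
        (\<forall>x\<in>frontier \<Omega>. \<nu> x = (1 / norm (grad \<rho> x)) *\<^sub>R grad \<rho> x))"

text \<open>d is the outer normal derivative of f at the boundary point x
  (one-sided derivative along nu x, using only values in the closure).\<close>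
definition has_normal_deriv :: "(real^'n::finite \<Rightarrow> real^'n) \<Rightarrow> (real^'n \<Rightarrow> real) \<Rightarrow> real^'n \<Rightarrow> real \<Rightarrow> bool" where
  "has_normal_deriv \<nu> f x d \<longleftrightarrow>
     ((\<lambda>t. (f x - f (x - t *\<^sub>R \<nu> x)) / t) \<longlongrightarrow> d) (at_right 0)"

definition dirichlet_eigenvalue :: "(real^'n::finite) set \<Rightarrow> real \<Rightarrow> bool" where
  "dirichlet_eigenvalue \<Omega> \<mu> \<longleftrightarrow> (\<exists>u. C2_on \<Omega> u \<and> continuous_on (closure \<Omega>) u \<and>
     (\<exists>x\<in>\<Omega>. u x \<noteq> 0) \<and> (\<forall>x\<in>\<Omega>. - laplacian u x = \<mu> * u x) \<and> (\<forall>x\<in>frontier \<Omega>. u x = 0))"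

definition smallest_dirichlet_eigenvalue :: "(real^'n::finite) set \<Rightarrow> real \<Rightarrow> bool" where
  "smallest_dirichlet_eigenvalue \<Omega> \<beta> \<longleftrightarrow>
     dirichlet_eigenvalue \<Omega> \<beta> \<and> (\<forall>\<mu>. dirichlet_eigenvalue \<Omega> \<mu> \<longrightarrow> \<beta> \<le> \<mu>)"

definition supersolution ::
  "(real^'n::finite) set \<Rightarrow> (real^'n \<Rightarrow> real^'n) \<Rightarrow> real \<Rightarrow> real \<Rightarrow> real \<Rightarrow> (real^'n \<Rightarrow> real) \<Rightarrow> bool" where
  "supersolution \<Omega> \<nu> lam p q \<psi> \<longleftrightarrow>
     C2_on \<Omega> \<psi> \<and> continuous_on (closure \<Omega>) \<psi> \<and>
     (\<forall>x\<in>\<Omega>. - laplacian \<psi> x \<ge> \<psi> x - \<psi> x powr p) \<and>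
     (\<forall>x\<in>frontier \<Omega>. \<exists>d. has_normal_deriv \<nu> \<psi> x d \<and> d \<ge> - lam * \<psi> x powr q)"

end

theory Submission
  imports Defs
begin

(* With A = \<phi> + \<epsilon> one computes -\<Delta>\<psi> = \<delta>\<tau> A^(\<tau>-2) ((1-\<tau>) |\<nabla>\<phi>|^2 + \<beta>\<phi>A), so \<psi> \<le> -\<Delta>\<psi>
   amounts to A^2 \<le> \<tau>(1-\<tau>) |\<nabla>\<phi>|^2 + \<tau>\<beta>\<phi>A. Where \<phi> is not small this follows from \<tau>\<beta> > 1
   once \<epsilon> is small. Where \<phi> is small the gradient term takes over, since |\<nabla>\<phi>| is bounded below
   near the boundary: otherwise a sequence with \<phi> \<rightarrow> 0 and \<nabla>\<phi> \<rightarrow> 0 accumulates at a boundary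
   point at which, by uniform continuity, \<nabla>\<phi> \<rightarrow> 0, and l'Hopital's rule along the inward normal
   forces the normal derivative there to vanish.
   On the boundary \<partial>\<psi>/\<partial>\<nu> = \<delta>\<tau>\<epsilon>^(\<tau>-1) \<partial>\<phi>/\<partial>\<nu> is linear in \<delta>, whereas \<lambda>\<psi>^q is of
   order \<delta>^q with q < 1, so every small enough \<delta> works. *)

lemma has_real_derivative_along_axis:
  assumes "has_partial_at i f (y + s *\<^sub>R axis i 1)"
  shows "((\<lambda>t. f (y + t *\<^sub>R axis i 1)) has_real_derivative partial i f (y + s *\<^sub>R axis i 1)) (at s)"
proof -
  have "((\<lambda>t. f ((y + s *\<^sub>R axis i 1) + t *\<^sub>R axis i 1)) has_real_derivative partial i f (y + s *\<^sub>R axis i 1)) (at 0)"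
    using assms unfolding has_partial_at_def partial_def by (simp add: DERIV_deriv_iff_field_differentiable)
  then show ?thesis
    using DERIV_shift[where f="\<lambda>t. f (y + t *\<^sub>R axis i 1)" and x=0 and z=s]
    by (simp add: scaleR_add_left add_ac)
qed

lemma partials_increment_bound:
  fixes f :: "real^'n::finite \<Rightarrow> real"
  assumes "\<And>y. (\<forall>i. \<bar>y$i - x$i\<bar> \<le> \<bar>h$i\<bar>) \<Longrightarrow>
             (\<forall>i. has_partial_at i f y \<and> \<bar>partial i f y - partial i f x\<bar> \<le> \<eta>)"
  shows "\<bar>f (x + h) - f x - (\<Sum>i\<in>UNIV. h$i * partial i f x)\<bar> \<le> \<eta> * (\<Sum>i\<in>UNIV. \<bar>h$i\<bar>)"
proof -
  \<comment> \<open>Move from x to x + h one coordinate at a time, applying the mean value theorem on each edge.\<close>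
  define p where "p S = (\<chi> i. if i \<in> S then x$i + h$i else x$i)" for S
  have partial_path: "\<bar>f (p S) - f x - (\<Sum>i\<in>S. h$i * partial i f x)\<bar> \<le> \<eta> * (\<Sum>i\<in>S. \<bar>h$i\<bar>)"
    if "finite S" for S
    using that
  proof (induction S rule: finite_induct)
    case empty
    have "p {} = x" by (simp add: p_def vec_eq_iff)
    then show ?case by simp
  next
    case (insert j S)
    have p_insert: "p (insert j S) = p S + h$j *\<^sub>R axis j 1"
      using insert(2) by (auto simp: p_def vec_eq_iff axis_def)
    define g where "g t = f (p S + t *\<^sub>R axis j 1) - t * partial j f x" for t
    have "norm (g (h$j) - g 0) \<le> \<eta> * norm (h$j - 0)"
    proof (rule field_differentiable_bound[OF convex_cball])
      fix s :: real assume "s \<in> cball 0 \<bar>h$j\<bar>"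
      then have "\<forall>i. \<bar>(p S + s *\<^sub>R axis j 1)$i - x$i\<bar> \<le> \<bar>h$i\<bar>"
        using insert(2) by (auto simp: p_def axis_def)
      note hyp = assms[OF this]
      have "((\<lambda>t. f (p S + t *\<^sub>R axis j 1)) has_real_derivative
              partial j f (p S + s *\<^sub>R axis j 1)) (at s)"
        using hyp by (intro has_real_derivative_along_axis) blast
      moreover have "((\<lambda>t. t * partial j f x) has_real_derivative partial j f x) (at s)"
        using DERIV_cmult_right[OF DERIV_ident] by simp
      ultimately show "(g has_real_derivative partial j f (p S + s *\<^sub>R axis j 1) - partial j f x)
              (at s within cball 0 \<bar>h$j\<bar>)"
        unfolding g_def by (rule has_field_derivative_at_within[OF DERIV_diff])
      show "norm (partial j f (p S + s *\<^sub>R axis j 1) - partial j f x) \<le> \<eta>"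
        using hyp by auto
    qed auto
    then have "\<bar>f (p (insert j S)) - f (p S) - h$j * partial j f x\<bar> \<le> \<eta> * \<bar>h$j\<bar>"
      by (simp add: g_def p_insert algebra_simps)
    then show ?case
      using insert by (simp add: distrib_left)
  qed
  have "p UNIV = x + h" by (simp add: p_def vec_eq_iff)
  then show ?thesis using partial_path[of UNIV] by simp
qed

lemma continuous_partials_close_on_ball:
  fixes f :: "real^'n::finite \<Rightarrow> real"
  assumes "open U" "x \<in> U" "\<forall>i. continuous_on U (partial i f)" "\<eta> > 0"
  shows "\<exists>d>0. ball x d \<subseteq> U \<and> (\<forall>i. \<forall>z\<in>ball x d. \<bar>partial i f z - partial i f x\<bar> < \<eta>)"
proof -
  have "\<forall>i. \<exists>d>0. \<forall>z. dist z x < d \<longrightarrow> dist (partial i f z) (partial i f x) < \<eta>"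
    using assms continuous_on_eq_continuous_at continuous_at_eps_delta by metis
  then obtain R where R: "\<And>i. R i > 0"
    "\<And>i z. dist z x < R i \<Longrightarrow> \<bar>partial i f z - partial i f x\<bar> < \<eta>"
    unfolding dist_real_def by metis
  obtain r0 where r0: "r0 > 0" "ball x r0 \<subseteq> U" using assms open_contains_ball by blast
  define d where "d = min r0 (Min (range R))"
  have "d > 0" "d \<le> r0" "\<And>i. d \<le> R i"
    using r0 R(1) by (simp_all add: d_def Min_gr_iff min.coboundedI2)
  then show ?thesis
  proof (intro exI[of _ d] conjI ballI allI)
    show "ball x d \<subseteq> U" using subset_ball[OF \<open>d \<le> r0\<close>] r0(2) by blast
    fix i z assume "z \<in> ball x d"
    then have "dist z x < R i" using \<open>d \<le> R i\<close> by (simp add: dist_commute)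
    then show "\<bar>partial i f z - partial i f x\<bar> < \<eta>" by (rule R(2))
  qed
qed

lemma has_derivative_of_continuous_partials:
  fixes f :: "real^'n::finite \<Rightarrow> real"
  assumes U: "open U" "x \<in> U" and P: "\<forall>i. \<forall>y\<in>U. has_partial_at i f y"
    and C: "\<forall>i. continuous_on U (partial i f)"
  shows "(f has_derivative (\<lambda>h. h \<bullet> grad f x)) (at x)"
  unfolding has_derivative_at_alt
proof (intro conjI allI impI)
  show "bounded_linear (\<lambda>h. h \<bullet> grad f x)" by (rule bounded_linear_inner_left)
  fix e :: real assume e: "e > 0"
  define \<eta> where "\<eta> = e / CARD('n)"
  have \<eta>: "\<eta> > 0" using e by (simp add: \<eta>_def)
  obtain d where "d > 0" "ball x d \<subseteq> U"
    and close: "\<forall>i. \<forall>z\<in>ball x d. \<bar>partial i f z - partial i f x\<bar> < \<eta>"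
    using continuous_partials_close_on_ball[OF U C \<eta>] by auto
  show "\<exists>d>0. \<forall>y. norm (y - x) < d \<longrightarrow>
          norm (f y - f x - (y - x) \<bullet> grad f x) \<le> e * norm (y - x)"
  proof (intro exI[of _ d] conjI allI impI \<open>d > 0\<close>)
    fix y assume y: "norm (y - x) < d"
    define h where "h = y - x"
    have "\<bar>f (x + h) - f x - (\<Sum>i\<in>UNIV. h$i * partial i f x)\<bar> \<le> \<eta> * (\<Sum>i\<in>UNIV. \<bar>h$i\<bar>)"
    proof (rule partials_increment_bound)
      fix z assume z: "\<forall>i. \<bar>z$i - x$i\<bar> \<le> \<bar>h$i\<bar>"
      have "(z - x) \<bullet> (z - x) \<le> h \<bullet> h"
        unfolding inner_vec_def using z by (intro sum_mono) (simp add: abs_le_square_iff power2_eq_square)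
      then have "dist z x \<le> norm h" by (simp add: dist_norm norm_le)
      then have "z \<in> ball x d" using y by (simp add: h_def dist_commute)
      then show "\<forall>i. has_partial_at i f z \<and> \<bar>partial i f z - partial i f x\<bar> \<le> \<eta>"
        using P \<open>ball x d \<subseteq> U\<close> close by (meson less_imp_le subsetD)
    qed
    also have "\<eta> * (\<Sum>i\<in>UNIV. \<bar>h$i\<bar>) \<le> \<eta> * (CARD('n) * norm h)"
      using \<eta> component_le_norm_cart by (intro mult_left_mono sum_bounded_above) auto
    also have "\<dots> = e * norm h" using \<eta>_def by simp
    finally show "norm (f y - f x - (y - x) \<bullet> grad f x) \<le> e * norm (y - x)"
      by (simp add: h_def inner_vec_def grad_def mult.commute)
  qed
qed

lemma has_real_derivative_along_line:
  fixes f :: "'a::real_inner \<Rightarrow> real"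
  assumes "(f has_derivative (\<lambda>h. h \<bullet> g)) (at (y + s *\<^sub>R v))"
  shows "((\<lambda>t. f (y + t *\<^sub>R v)) has_real_derivative v \<bullet> g) (at s)"
proof -
  have "((\<lambda>t. y + t *\<^sub>R v) has_derivative (\<lambda>t. t *\<^sub>R v)) (at s)"
    by (auto intro!: derivative_eq_intros)
  from has_derivative_compose[OF this assms]
  have "((\<lambda>t. f (y + t *\<^sub>R v)) has_derivative (\<lambda>t. (v \<bullet> g) * t)) (at s)"
    by (simp add: ac_simps)
  then show ?thesis by (simp add: has_field_derivative_def)
qed

lemma smooth_domain_inward_normal:
  fixes \<Omega> :: "(real^'n::finite) set"
  assumes dom: "smooth_domain \<Omega> \<nu>" and x: "x \<in> frontier \<Omega>"
  shows "norm (\<nu> x) = 1" and "\<forall>\<^sub>F s in at_right 0. x - s *\<^sub>R \<nu> x \<in> \<Omega>"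
proof -
  obtain \<rho> where smooth: "smooth_everywhere \<rho>" and \<Omega>_eq: "\<Omega> = {x. \<rho> x < 0}"
    and grad_ne: "\<forall>x. \<rho> x = 0 \<longrightarrow> grad \<rho> x \<noteq> 0"
    and \<nu>_eq: "\<forall>x\<in>frontier \<Omega>. \<nu> x = (1 / norm (grad \<rho> x)) *\<^sub>R grad \<rho> x"
    and "open \<Omega>"
    using dom unfolding smooth_domain_def by blast
  have cont: "continuous_on UNIV \<rho>"
    and P: "\<forall>i. \<forall>y\<in>UNIV. has_partial_at i \<rho> y" and C: "\<forall>i. continuous_on UNIV (partial i \<rho>)"
    using smooth unfolding smooth_everywhere_def
    by (metis ipartial.simps(1), metis ipartial.simps(1), metis ipartial.simps)
  have "closure \<Omega> \<subseteq> {x. \<rho> x \<le> 0}"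
    unfolding \<Omega>_eq by (rule closure_minimal) (auto intro: closed_Collect_le cont)
  moreover have "x \<in> closure \<Omega>" "x \<notin> \<Omega>"
    using x \<open>open \<Omega>\<close> by (auto simp: frontier_def interior_open)
  ultimately have "\<rho> x = 0" using \<Omega>_eq by fastforce
  then have g: "grad \<rho> x \<noteq> 0" using grad_ne by blast
  have \<nu>x: "\<nu> x = (1 / norm (grad \<rho> x)) *\<^sub>R grad \<rho> x" using \<nu>_eq x by blast
  then show "norm (\<nu> x) = 1" using g by simp
  have "(\<rho> has_derivative (\<lambda>h. h \<bullet> grad \<rho> x)) (at (x + 0 *\<^sub>R - \<nu> x))"
    using has_derivative_of_continuous_partials[OF open_UNIV UNIV_I P C] by simp
  from has_real_derivative_along_line[OF this]
  have "((\<lambda>t. \<rho> (x + t *\<^sub>R - \<nu> x)) has_real_derivative - norm (grad \<rho> x)) (at 0)"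
    using g by (simp add: \<nu>x inner_commute dot_square_norm power2_eq_square)
  from DERIV_neg_dec_right[OF this] obtain d
    where "d > 0" "\<And>s. 0 < s \<Longrightarrow> s < d \<Longrightarrow> \<rho> (x - s *\<^sub>R \<nu> x) < 0"
    using g \<open>\<rho> x = 0\<close> by auto
  then show "\<forall>\<^sub>F s in at_right 0. x - s *\<^sub>R \<nu> x \<in> \<Omega>"
    unfolding \<Omega>_eq by (intro eventually_at_rightI[of 0 d]) auto
qed

lemma has_normal_deriv_eq_0_if_grad_tendsto_0:
  fixes \<Omega> :: "(real^'n::finite) set"
  assumes dom: "smooth_domain \<Omega> \<nu>" and x: "x \<in> frontier \<Omega>"
    and P: "\<forall>i. \<forall>y\<in>\<Omega>. has_partial_at i \<phi> y" and C: "\<forall>i. continuous_on \<Omega> (partial i \<phi>)"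
    and cont: "continuous_on (closure \<Omega>) \<phi>"
    and grad_lim: "(grad \<phi> \<longlongrightarrow> 0) (at x within \<Omega>)"
    and nd: "has_normal_deriv \<nu> \<phi> x d"
  shows "d = 0"
proof -
  have "open \<Omega>" using dom by (simp add: smooth_domain_def)
  note inside = smooth_domain_inward_normal[OF dom x]
  have line: "filterlim (\<lambda>s. x - s *\<^sub>R \<nu> x) (at x within \<Omega>) (at_right 0)"
    unfolding filterlim_at
  proof
    show "\<forall>\<^sub>F s in at_right 0. x - s *\<^sub>R \<nu> x \<in> \<Omega> \<and> x - s *\<^sub>R \<nu> x \<noteq> x"
      using inside(2) eventually_at_right_less[of 0] by eventually_elim (use inside(1) in auto)
    have "((\<lambda>s. x - s *\<^sub>R \<nu> x) \<longlongrightarrow> x - 0 *\<^sub>R \<nu> x) (at_right 0)"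
      by (intro tendsto_intros)
    then show "((\<lambda>s. x - s *\<^sub>R \<nu> x) \<longlongrightarrow> x) (at_right 0)" by simp
  qed
  have "(\<phi> \<longlongrightarrow> \<phi> x) (at x within \<Omega>)"
    using cont x closure_subset unfolding continuous_on_def frontier_def
    by (blast intro: tendsto_within_subset)
  from tendsto_diff[OF tendsto_const[of "\<phi> x"] filterlim_compose[OF this line]]
  have "((\<lambda>s. \<phi> x - \<phi> (x - s *\<^sub>R \<nu> x)) \<longlongrightarrow> 0) (at_right 0)"
    by simp
  then have "((\<lambda>s. (\<phi> x - \<phi> (x - s *\<^sub>R \<nu> x)) / s) \<longlongrightarrow> 0) (at_right 0)"
  proof (rule lhopital_right_0[where g' = "\<lambda>_. 1" and f' = "\<lambda>s. \<nu> x \<bullet> grad \<phi> (x - s *\<^sub>R \<nu> x)"])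
    show "((\<lambda>s. s) \<longlongrightarrow> 0) (at_right 0)" by (rule tendsto_ident_at)
    show "\<forall>\<^sub>F s in at_right 0. (s::real) \<noteq> 0"
      using eventually_at_right_less[of 0] by (rule eventually_mono) simp
    show "\<forall>\<^sub>F s in at_right 0. (1::real) \<noteq> 0" by simp
    show "\<forall>\<^sub>F s in at_right 0. ((\<lambda>s. s) has_real_derivative 1) (at s)" by (simp add: DERIV_ident)
    show "\<forall>\<^sub>F s in at_right 0.
        ((\<lambda>s. \<phi> x - \<phi> (x - s *\<^sub>R \<nu> x)) has_real_derivative \<nu> x \<bullet> grad \<phi> (x - s *\<^sub>R \<nu> x)) (at s)"
      using inside(2)
    proof eventually_elim
      case (elim s)
      then have "(\<phi> has_derivative (\<lambda>h. h \<bullet> grad \<phi> (x - s *\<^sub>R \<nu> x))) (at (x + s *\<^sub>R - \<nu> x))"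
        using has_derivative_of_continuous_partials[OF \<open>open \<Omega>\<close> _ P C] by simp
      from DERIV_diff[OF DERIV_const has_real_derivative_along_line[OF this]]
      show ?case by simp
    qed
    have "((\<lambda>s. grad \<phi> (x - s *\<^sub>R \<nu> x)) \<longlongrightarrow> 0) (at_right 0)"
      by (rule filterlim_compose[OF grad_lim line])
    from tendsto_inner[OF tendsto_const this]
    show "((\<lambda>s. \<nu> x \<bullet> grad \<phi> (x - s *\<^sub>R \<nu> x) / 1) \<longlongrightarrow> 0) (at_right 0)"
      by simp
  qed
  moreover have "((\<lambda>s. (\<phi> x - \<phi> (x - s *\<^sub>R \<nu> x)) / s) \<longlongrightarrow> d) (at_right 0)"
    using nd unfolding has_normal_deriv_def .
  ultimately show "d = 0" using tendsto_unique trivial_limit_at_right_real by blast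
qed

lemma uniformly_continuous_on_tendsto_of_sequence:
  fixes f :: "'a::metric_space \<Rightarrow> 'b::complete_space"
  assumes uc: "uniformly_continuous_on X f" and Y: "\<forall>k. Y k \<in> X" "Y \<longlonglongrightarrow> x"
    and "x \<notin> X" and lim: "(\<lambda>k. f (Y k)) \<longlonglongrightarrow> l"
  shows "(f \<longlongrightarrow> l) (at x within X)"
proof -
  have "x \<in> closure X" using Y closure_sequential by blast
  then obtain l' where l': "(f \<longlongrightarrow> l') (at x within X)"
    using uniformly_continuous_on_extension_at_closure[OF uc] by blast
  have "filterlim Y (at x within X) sequentially"
    using Y \<open>x \<notin> X\<close> by (auto simp: filterlim_at intro!: always_eventually)
  from filterlim_compose[OF l' this] have "(\<lambda>k. f (Y k)) \<longlonglongrightarrow> l'" .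
  with lim have "l' = l" using LIMSEQ_unique by blast
  with l' show ?thesis by simp
qed

lemma grad_tendsto_0_at_frontier_point:
  fixes \<Omega> :: "(real^'n::finite) set"
  assumes dom: "smooth_domain \<Omega> \<nu>" and cont: "continuous_on (closure \<Omega>) \<phi>"
    and uc: "\<forall>i. uniformly_continuous_on \<Omega> (partial i \<phi>)" and pos: "\<forall>y\<in>\<Omega>. \<phi> y > 0"
    and Y: "\<forall>k. Y k \<in> \<Omega>" "(\<lambda>k. \<phi> (Y k)) \<longlonglongrightarrow> 0" "(\<lambda>k. grad \<phi> (Y k)) \<longlonglongrightarrow> 0"
  shows "\<exists>x\<in>frontier \<Omega>. (grad \<phi> \<longlongrightarrow> 0) (at x within \<Omega>)"
proof -
  have "seq_compact (closure \<Omega>)"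
    using dom by (simp add: smooth_domain_def compact_imp_seq_compact)
  then obtain x \<sigma> where x: "x \<in> closure \<Omega>" and "strict_mono \<sigma>" and Y\<sigma>: "(Y \<circ> \<sigma>) \<longlonglongrightarrow> x"
    using Y(1) closure_subset by (metis seq_compactE subsetD)
  have "(\<lambda>k. \<phi> (Y (\<sigma> k))) \<longlonglongrightarrow> \<phi> x"
    using continuous_on_tendsto_compose[OF cont Y\<sigma> x] Y(1) closure_subset
    by (auto simp: comp_def intro!: always_eventually)
  moreover have "(\<lambda>k. \<phi> (Y (\<sigma> k))) \<longlonglongrightarrow> 0"
    using LIMSEQ_subseq_LIMSEQ[OF Y(2) \<open>strict_mono \<sigma>\<close>] by (simp add: comp_def)
  ultimately have "\<phi> x = 0" using LIMSEQ_unique by blast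
  then have "x \<notin> \<Omega>" using pos by force
  then have "x \<in> frontier \<Omega>"
    using x dom by (simp add: frontier_def interior_open smooth_domain_def)
  moreover have "(grad \<phi> \<longlongrightarrow> 0) (at x within \<Omega>)"
  proof (rule vec_tendstoI)
    fix i
    have "(\<lambda>k. grad \<phi> (Y (\<sigma> k)) $ i) \<longlonglongrightarrow> 0 $ i"
      using tendsto_vec_nth[OF LIMSEQ_subseq_LIMSEQ[OF Y(3) \<open>strict_mono \<sigma>\<close>]] by (simp add: comp_def)
    then have "(partial i \<phi> \<longlongrightarrow> 0) (at x within \<Omega>)"
      using uc Y(1) Y\<sigma> \<open>x \<notin> \<Omega>\<close>
      by (intro uniformly_continuous_on_tendsto_of_sequence) (auto simp: comp_def grad_def)
    then show "((\<lambda>y. grad \<phi> y $ i) \<longlongrightarrow> 0 $ i) (at x within \<Omega>)" by (simp add: grad_def)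
  qed
  ultimately show ?thesis by blast
qed

lemma grad_bounded_below_near_boundary:
  fixes \<Omega> :: "(real^'n::finite) set"
  assumes dom: "smooth_domain \<Omega> \<nu>"
    and P: "\<forall>i. \<forall>y\<in>\<Omega>. has_partial_at i \<phi> y" and C: "\<forall>i. continuous_on \<Omega> (partial i \<phi>)"
    and cont: "continuous_on (closure \<Omega>) \<phi>"
    and uc: "\<forall>i. uniformly_continuous_on \<Omega> (partial i \<phi>)"
    and pos: "\<forall>y\<in>\<Omega>. \<phi> y > 0"
    and normal: "\<forall>x\<in>frontier \<Omega>. \<exists>d. has_normal_deriv \<nu> \<phi> x d \<and> d \<noteq> 0"
  shows "\<exists>\<eta>>0. \<exists>c>0. \<forall>y\<in>\<Omega>. \<phi> y < \<eta> \<longrightarrow> c \<le> norm (grad \<phi> y)"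
proof (rule ccontr)
  assume "\<not> ?thesis"
  then have "\<forall>k::nat. \<exists>y\<in>\<Omega>. \<phi> y < inverse (Suc k) \<and> norm (grad \<phi> y) < inverse (Suc k)"
    by (metis inverse_positive_iff_positive not_le of_nat_0_less_iff zero_less_Suc)
  then obtain Y where Y: "\<forall>k. Y k \<in> \<Omega>" "\<And>k. \<phi> (Y k) < inverse (Suc k)"
    "\<And>k. norm (grad \<phi> (Y k)) < inverse (Suc k)"
    by metis
  have "(\<lambda>k. \<phi> (Y k)) \<longlonglongrightarrow> 0"
  proof (intro Lim_null_comparison[OF _ LIMSEQ_inverse_real_of_nat] always_eventually allI)
    fix k
    show "norm (\<phi> (Y k)) \<le> inverse (real (Suc k))" using Y(1) Y(2)[of k] pos by (simp add: less_imp_le)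
  qed
  moreover have "(\<lambda>k. grad \<phi> (Y k)) \<longlonglongrightarrow> 0"
    using Y(3) by (intro Lim_null_comparison[OF _ LIMSEQ_inverse_real_of_nat] always_eventually)
      (auto intro: less_imp_le)
  ultimately obtain x where "x \<in> frontier \<Omega>" and "(grad \<phi> \<longlongrightarrow> 0) (at x within \<Omega>)"
    using grad_tendsto_0_at_frontier_point[OF dom cont uc pos Y(1)] by blast
  moreover obtain d where "has_normal_deriv \<nu> \<phi> x d" "d \<noteq> 0"
    using normal \<open>x \<in> frontier \<Omega>\<close> by blast
  ultimately show False
    using has_normal_deriv_eq_0_if_grad_tendsto_0[OF dom _ P C cont] by blast
qed

lemma has_partial_at_compose:
  assumes "has_partial_at i f y" "(G has_real_derivative G') (at (f y))"
  shows "has_partial_at i (\<lambda>z. G (f z)) y \<and> partial i (\<lambda>z. G (f z)) y = G' * partial i f y"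
proof -
  have "((\<lambda>t. f (y + t *\<^sub>R axis i 1)) has_real_derivative partial i f y) (at 0)"
    using has_real_derivative_along_axis[of i f y 0] assms(1) by simp
  from DERIV_chain2[OF _ this] assms(2)
  have "((\<lambda>t. G (f (y + t *\<^sub>R axis i 1))) has_real_derivative G' * partial i f y) (at 0)" by simp
  then show ?thesis unfolding has_partial_at_def partial_def
    using DERIV_imp_deriv field_differentiable_def by blast
qed

lemma has_partial_at_mult:
  assumes "has_partial_at i f y" "has_partial_at i g y"
  shows "has_partial_at i (\<lambda>z. f z * g z) y \<and>
         partial i (\<lambda>z. f z * g z) y = partial i f y * g y + f y * partial i g y"
proof -
  have "((\<lambda>t. f (y + t *\<^sub>R axis i 1) * g (y + t *\<^sub>R axis i 1)) has_real_derivative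
      partial i f y * g y + f y * partial i g y) (at 0)"
    using DERIV_mult[OF has_real_derivative_along_axis[of i f y 0]
        has_real_derivative_along_axis[of i g y 0]] assms by (simp add: mult.commute)
  then show ?thesis unfolding has_partial_at_def partial_def
    using DERIV_imp_deriv field_differentiable_def by blast
qed

lemma partial_cong_open:
  fixes f g :: "real^'n::finite \<Rightarrow> real"
  assumes "open U" "y \<in> U" "\<And>z. z \<in> U \<Longrightarrow> f z = g z"
  shows "(has_partial_at i f y \<longleftrightarrow> has_partial_at i g y) \<and> partial i f y = partial i g y"
proof -
  obtain r where r: "r > 0" "ball y r \<subseteq> U" using assms(1,2) open_contains_ball by blast
  have "\<forall>\<^sub>F t in nhds 0. (t::real) \<in> ball 0 r" using r(1) by (intro eventually_nhds_in_open) auto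
  then have ev: "\<forall>\<^sub>F t in nhds 0. f (y + t *\<^sub>R axis i 1) = g (y + t *\<^sub>R axis i 1)"
    by (rule eventually_mono) (use r(2) assms(3) in \<open>auto simp: dist_norm subset_iff\<close>)
  have "partial i f y = partial i g y" unfolding partial_def by (rule deriv_cong_ev[OF ev refl])
  moreover have "has_partial_at i f y \<longleftrightarrow> has_partial_at i g y"
    unfolding has_partial_at_def field_differentiable_def using DERIV_cong_ev[OF refl ev refl] by simp
  ultimately show ?thesis by blast
qed

lemma DERIV_powr_shift:
  fixes s e a :: real
  assumes "s + e > 0"
  shows "((\<lambda>s. (s + e) powr a) has_real_derivative a * (s + e) powr (a - 1)) (at s)"
  using DERIV_chain2[OF has_real_derivative_powr[OF assms] DERIV_add[OF DERIV_ident DERIV_const]]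
  by simp

lemma partial_powr_shift:
  assumes "has_partial_at i \<phi> y" "\<phi> y + e > 0"
  shows "has_partial_at i (\<lambda>x. d * (\<phi> x + e) powr t) y \<and>
         partial i (\<lambda>x. d * (\<phi> x + e) powr t) y = d * t * (\<phi> y + e) powr (t - 1) * partial i \<phi> y"
  using has_partial_at_compose[OF assms(1) DERIV_cmult[OF DERIV_powr_shift[OF assms(2)]]]
  by (simp add: mult_ac)

lemma partial_partial_powr_shift:
  fixes \<phi> :: "real^'n::finite \<Rightarrow> real"
  assumes "open \<Omega>" "y \<in> \<Omega>" and pos: "\<forall>z\<in>\<Omega>. \<phi> z + e > 0"
    and P: "\<forall>i. \<forall>z\<in>\<Omega>. has_partial_at i \<phi> z"
    and PP: "\<forall>i j. \<forall>z\<in>\<Omega>. has_partial_at j (partial i \<phi>) z"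
  shows "has_partial_at j (partial i (\<lambda>x. d * (\<phi> x + e) powr t)) y \<and>
         partial j (partial i (\<lambda>x. d * (\<phi> x + e) powr t)) y =
           d * t * ((t - 1) * (\<phi> y + e) powr (t - 2) * partial j \<phi> y * partial i \<phi> y
                    + (\<phi> y + e) powr (t - 1) * partial j (partial i \<phi>) y)"
proof -
  define F where "F z = d * t * (\<phi> z + e) powr (t - 1) * partial i \<phi> z" for z
  have "(has_partial_at j (partial i (\<lambda>x. d * (\<phi> x + e) powr t)) y \<longleftrightarrow> has_partial_at j F y) \<and>
      partial j (partial i (\<lambda>x. d * (\<phi> x + e) powr t)) y = partial j F y"
    using P pos by (intro partial_cong_open[OF assms(1,2)]) (simp add: F_def partial_powr_shift)
  moreover have "has_partial_at j (\<lambda>z. (\<phi> z + e) powr (t - 1)) y \<and>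
      partial j (\<lambda>z. (\<phi> z + e) powr (t - 1)) y = (t - 1) * (\<phi> y + e) powr (t - 2) * partial j \<phi> y"
    using partial_powr_shift[of j \<phi> y e 1 "t - 1"] P pos assms(2) by (simp add: diff_diff_add)
  then have "has_partial_at j (\<lambda>z. (\<phi> z + e) powr (t - 1) * partial i \<phi> z) y \<and>
      partial j (\<lambda>z. (\<phi> z + e) powr (t - 1) * partial i \<phi> z) y =
        (t - 1) * (\<phi> y + e) powr (t - 2) * partial j \<phi> y * partial i \<phi> y
        + (\<phi> y + e) powr (t - 1) * partial j (partial i \<phi>) y"
    using has_partial_at_mult[of j _ y "partial i \<phi>"] PP assms(2) by auto
  then have "has_partial_at j F y \<and> partial j F y =
      d * t * ((t - 1) * (\<phi> y + e) powr (t - 2) * partial j \<phi> y * partial i \<phi> y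
        + (\<phi> y + e) powr (t - 1) * partial j (partial i \<phi>) y)"
    using has_partial_at_compose[OF _ DERIV_cmult[OF DERIV_ident], of j _ y "d * t"]
    unfolding F_def by (fastforce simp: mult.assoc)
  ultimately show ?thesis by simp
qed

lemma C2_on_powr_shift:
  fixes \<phi> :: "real^'n::finite \<Rightarrow> real"
  assumes "open \<Omega>" and C2: "C2_on \<Omega> \<phi>" and pos: "\<forall>y\<in>\<Omega>. \<phi> y + e > 0"
  shows "C2_on \<Omega> (\<lambda>x. d * (\<phi> x + e) powr t)"
proof -
  have cont: "continuous_on \<Omega> \<phi>" and P: "\<forall>i. \<forall>y\<in>\<Omega>. has_partial_at i \<phi> y"
    and C: "\<forall>i. continuous_on \<Omega> (partial i \<phi>)"
    and PP: "\<forall>i j. \<forall>y\<in>\<Omega>. has_partial_at j (partial i \<phi>) y"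
    and CC: "\<forall>i j. continuous_on \<Omega> (partial j (partial i \<phi>))"
    using C2 unfolding C2_on_def by auto
  have first: "has_partial_at i (\<lambda>x. d * (\<phi> x + e) powr t) y \<and>
      partial i (\<lambda>x. d * (\<phi> x + e) powr t) y = d * t * (\<phi> y + e) powr (t - 1) * partial i \<phi> y"
    if "y \<in> \<Omega>" for i y
    using partial_powr_shift P pos that by blast
  note second = partial_partial_powr_shift[OF \<open>open \<Omega>\<close> _ pos P PP]
  show ?thesis
    unfolding C2_on_def
  proof (intro conjI allI ballI)
    show "continuous_on \<Omega> (\<lambda>x. d * (\<phi> x + e) powr t)"
      using pos by (intro continuous_intros cont) auto
    fix i j
    show "has_partial_at i (\<lambda>x. d * (\<phi> x + e) powr t) y" if "y \<in> \<Omega>" for y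
      using first[OF that] by blast
    show "has_partial_at j (partial i (\<lambda>x. d * (\<phi> x + e) powr t)) y" if "y \<in> \<Omega>" for y
      using second[OF that] by blast
    have "continuous_on \<Omega> (\<lambda>x. d * t * (\<phi> x + e) powr (t - 1) * partial i \<phi> x)"
      using pos C by (intro continuous_intros cont) auto
    then show "continuous_on \<Omega> (partial i (\<lambda>x. d * (\<phi> x + e) powr t))"
      by (rule continuous_on_cong[THEN iffD1, OF refl, rotated]) (use first in simp)
    have "continuous_on \<Omega> (\<lambda>x. d * t * ((t - 1) * (\<phi> x + e) powr (t - 2) * partial j \<phi> x * partial i \<phi> x
                    + (\<phi> x + e) powr (t - 1) * partial j (partial i \<phi>) x))"
      using pos C CC by (intro continuous_intros cont) auto
    then show "continuous_on \<Omega> (partial j (partial i (\<lambda>x. d * (\<phi> x + e) powr t)))"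
      by (rule continuous_on_cong[THEN iffD1, OF refl, rotated]) (use second in simp)
  qed
qed

lemma norm_grad_squared: "(norm (grad f x))\<^sup>2 = (\<Sum>i\<in>UNIV. (partial i f x)\<^sup>2)"
  unfolding power2_norm_eq_inner by (simp add: inner_vec_def grad_def power2_eq_square)

lemma laplacian_powr_shift:
  fixes \<phi> :: "real^'n::finite \<Rightarrow> real"
  assumes "open \<Omega>" "C2_on \<Omega> \<phi>" "\<forall>z\<in>\<Omega>. \<phi> z + e > 0" "y \<in> \<Omega>"
  shows "laplacian (\<lambda>x. d * (\<phi> x + e) powr t) y =
    d * t * ((t - 1) * (\<phi> y + e) powr (t - 2) * (norm (grad \<phi> y))\<^sup>2
             + (\<phi> y + e) powr (t - 1) * laplacian \<phi> y)"
proof -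
  have "partial i (partial i (\<lambda>x. d * (\<phi> x + e) powr t)) y =
      d * t * ((t - 1) * (\<phi> y + e) powr (t - 2) * (partial i \<phi> y)\<^sup>2
               + (\<phi> y + e) powr (t - 1) * partial i (partial i \<phi>) y)" for i
    using partial_partial_powr_shift[OF assms(1,4,3)] assms(2)
    by (simp add: C2_on_def power2_eq_square mult.assoc)
  then show ?thesis
    unfolding laplacian_def norm_grad_squared
    by (simp add: sum.distrib sum_distrib_left distrib_left mult.assoc)
qed

lemma has_normal_deriv_compose:
  assumes nd: "has_normal_deriv \<nu> \<phi> x d" and G: "(G has_real_derivative G') (at (\<phi> x))"
  shows "has_normal_deriv \<nu> (\<lambda>z. G (\<phi> z)) x (G' * d)"
proof -
  obtain g where g: "\<And>z. G z - G (\<phi> x) = g z * (z - \<phi> x)" "isCont g (\<phi> x)" "g (\<phi> x) = G'"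
    using G unfolding CARAT_DERIV by blast
  define u where "u t = \<phi> (x - t *\<^sub>R \<nu> x)" for t
  have quot: "((\<lambda>t. (\<phi> x - u t) / t) \<longlongrightarrow> d) (at_right 0)"
    using nd unfolding has_normal_deriv_def u_def .
  have "((\<lambda>t. \<phi> x - t * ((\<phi> x - u t) / t)) \<longlongrightarrow> \<phi> x - 0 * d) (at_right (0::real))"
    by (intro tendsto_intros quot)
  moreover have "\<forall>\<^sub>F t in at_right 0. \<phi> x - t * ((\<phi> x - u t) / t) = u t"
    using eventually_at_right_less[of 0] by (rule eventually_mono) simp
  ultimately have "(u \<longlongrightarrow> \<phi> x) (at_right 0)"
    by (simp add: tendsto_cong[symmetric])
  from tendsto_mult[OF isCont_tendsto_compose[OF g(2) this] quot]
  have lim: "((\<lambda>t. g (u t) * ((\<phi> x - u t) / t)) \<longlongrightarrow> G' * d) (at_right 0)" by (simp add: g(3))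
  have eq: "g (u t) * ((\<phi> x - u t) / t) = (G (\<phi> x) - G (u t)) / t" for t
  proof -
    have "g (u t) * (\<phi> x - u t) = G (\<phi> x) - G (u t)" using g(1)[of "u t"] by (simp add: algebra_simps)
    then show ?thesis by (metis times_divide_eq_right)
  qed
  show ?thesis using lim unfolding eq unfolding has_normal_deriv_def u_def .
qed

lemma small_shift_square_le:
  fixes \<tau> \<beta> \<eta> c :: real
  assumes "0 < \<tau>" "\<tau> < 1" "\<tau> * \<beta> > 1" "\<eta> > 0" "c > 0"
  shows "\<exists>\<epsilon>0>0. \<forall>\<epsilon> f S. 0 < \<epsilon> \<and> \<epsilon> \<le> \<epsilon>0 \<and> 0 < f \<and> 0 \<le> S \<and> (f < \<eta> \<longrightarrow> c \<le> S) \<longrightarrow>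
            (f + \<epsilon>)\<^sup>2 \<le> \<tau> * (1 - \<tau>) * S + \<tau> * \<beta> * f * (f + \<epsilon>)"
proof -
  define \<epsilon>0 where "\<epsilon>0 = min 1 (min ((\<tau> * \<beta> - 1) * \<eta>) (\<tau> * (1 - \<tau>) * c / (\<eta> + 1)))"
  have "\<epsilon>0 > 0" using assms by (simp add: \<epsilon>0_def)
  moreover have "(f + \<epsilon>)\<^sup>2 \<le> \<tau> * (1 - \<tau>) * S + \<tau> * \<beta> * f * (f + \<epsilon>)"
    if \<epsilon>: "0 < \<epsilon>" "\<epsilon> \<le> \<epsilon>0" and f: "0 < f" and S: "0 \<le> S" "f < \<eta> \<longrightarrow> c \<le> S" for \<epsilon> f S
  proof -
    have split: "(f + \<epsilon>)\<^sup>2 = \<epsilon> * (f + \<epsilon>) + f * (f + \<epsilon>)" by (simp add: power2_eq_square algebra_simps)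
    have "f * (f + \<epsilon>) \<le> \<tau> * \<beta> * f * (f + \<epsilon>)" using assms f \<epsilon> by (simp add: mult_le_cancel_right1)
    moreover have "\<epsilon> * (f + \<epsilon>) \<le> \<tau> * (1 - \<tau>) * S + (\<tau> * \<beta> - 1) * f * (f + \<epsilon>)"
    proof (cases "f < \<eta>")
      \<comment> \<open>Near the boundary the gradient term absorbs the shift, in the interior the eigenvalue term does.\<close>
      case True
      have "\<epsilon> * (f + \<epsilon>) \<le> \<epsilon>0 * (\<eta> + 1)"
        using True \<epsilon> f by (intro mult_mono) (auto simp: \<epsilon>0_def)
      also have "\<dots> \<le> \<tau> * (1 - \<tau>) * c"
      proof -
        have "\<epsilon>0 \<le> \<tau> * (1 - \<tau>) * c / (\<eta> + 1)" by (simp add: \<epsilon>0_def)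
        then show ?thesis using assms by (simp add: pos_le_divide_eq)
      qed
      also have "\<dots> \<le> \<tau> * (1 - \<tau>) * S" using True S assms by (simp add: mult_left_mono)
      finally show ?thesis using assms f \<epsilon> by (smt (verit) mult_pos_pos)
    next
      case False
      have "\<epsilon> \<le> (\<tau> * \<beta> - 1) * f"
        using False \<epsilon> assms by (smt (verit, best) \<epsilon>0_def mult_left_mono min.boundedE)
      then have "\<epsilon> * (f + \<epsilon>) \<le> (\<tau> * \<beta> - 1) * f * (f + \<epsilon>)" using f \<epsilon> by (simp add: mult_right_mono)
      then show ?thesis using assms S by (smt (verit) mult_nonneg_nonneg)
    qed
    ultimately show ?thesis unfolding split by (simp add: algebra_simps)
  qed
  ultimately show ?thesis by blast
qed

lemma linear_le_powr_near_0:
  fixes B K q :: real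
  assumes "K > 0" "q < 1"
  shows "\<exists>\<delta>1>0. \<forall>\<delta>. 0 < \<delta> \<and> \<delta> \<le> \<delta>1 \<longrightarrow> B * \<delta> \<le> K * \<delta> powr q"
proof (cases "B > 0")
  case True
  define \<delta>1 where "\<delta>1 = (K / B) powr (1 / (1 - q))"
  have "B * \<delta> \<le> K * \<delta> powr q" if \<delta>: "0 < \<delta>" "\<delta> \<le> \<delta>1" for \<delta>
  proof -
    have "\<delta> powr (1 - q) \<le> \<delta>1 powr (1 - q)" using \<delta> assms by (intro powr_mono2) auto
    also have "\<dots> = K / B" using assms True by (simp add: \<delta>1_def powr_powr)
    finally have "B * \<delta> powr (1 - q) \<le> K" using True by (simp add: field_simps)
    then have "B * \<delta> powr (1 - q) * \<delta> powr q \<le> K * \<delta> powr q" by (rule mult_right_mono) simp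
    then show ?thesis using \<delta> by (simp add: mult.assoc powr_add[symmetric])
  qed
  moreover have "\<delta>1 > 0" using assms True by (simp add: \<delta>1_def)
  ultimately show ?thesis by blast
next
  case False
  then have "B * \<delta> \<le> K * \<delta> powr q" if "0 < \<delta>" for \<delta>
    using that assms by (smt (verit) mult_nonneg_nonneg mult_nonpos_nonneg powr_ge_zero)
  then show ?thesis using zero_less_one by blast
qed

lemma powr_shift_le_minus_laplacian:
  fixes \<phi> :: "real^'n::finite \<Rightarrow> real"
  assumes "open \<Omega>" "C2_on \<Omega> \<phi>" "\<forall>z\<in>\<Omega>. \<phi> z + e > 0" "y \<in> \<Omega>"
    and eig: "- laplacian \<phi> y = \<beta> * \<phi> y" and "0 < d"
    and key: "(\<phi> y + e)\<^sup>2 \<le> t * (1 - t) * (norm (grad \<phi> y))\<^sup>2 + t * \<beta> * \<phi> y * (\<phi> y + e)"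
  shows "d * (\<phi> y + e) powr t \<le> - laplacian (\<lambda>x. d * (\<phi> x + e) powr t) y"
proof -
  define A where "A = \<phi> y + e"
  have "A > 0" using assms(3,4) by (simp add: A_def)
  have "- laplacian (\<lambda>x. d * (\<phi> x + e) powr t) y
      = d * t * ((1 - t) * A powr (t - 2) * (norm (grad \<phi> y))\<^sup>2 + A powr (t - 1) * \<beta> * \<phi> y)"
  proof -
    have "laplacian \<phi> y = - (\<beta> * \<phi> y)" using eig by simp
    then show ?thesis using laplacian_powr_shift[OF assms(1-4), of d t] by (simp add: A_def algebra_simps)
  qed
  also have "\<dots> = d * A powr t * ((t * (1 - t) * (norm (grad \<phi> y))\<^sup>2 + t * \<beta> * \<phi> y * A) / A\<^sup>2)"
    using \<open>A > 0\<close> by (simp add: powr_diff power2_eq_square field_simps)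
  also have "\<dots> \<ge> d * A powr t"
    using key \<open>A > 0\<close> \<open>0 < d\<close> by (simp add: A_def le_divide_eq)
  finally show ?thesis by (simp add: A_def)
qed

lemma powr_shift_normal_deriv_ge:
  assumes nd: "has_normal_deriv \<nu> \<phi> x d" and "\<phi> x = 0" "- d \<le> c" "0 < \<tau>" "0 < \<epsilon>" "0 < \<delta>"
    and small: "\<tau> * \<epsilon> powr (\<tau> - 1) * c * \<delta> \<le> lam * \<epsilon> powr (\<tau> * q) * \<delta> powr q"
  shows "\<exists>d'. has_normal_deriv \<nu> (\<lambda>x. \<delta> * (\<phi> x + \<epsilon>) powr \<tau>) x d' \<and>
           - lam * (\<delta> * (\<phi> x + \<epsilon>) powr \<tau>) powr q \<le> d'"
proof (intro exI conjI)
  have "((\<lambda>s. \<delta> * (s + \<epsilon>) powr \<tau>) has_real_derivative \<delta> * (\<tau> * \<epsilon> powr (\<tau> - 1))) (at (\<phi> x))"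
    using DERIV_cmult[OF DERIV_powr_shift[of "\<phi> x" \<epsilon> \<tau>], of \<delta>] assms(2,5) by simp
  from has_normal_deriv_compose[OF nd this]
  show "has_normal_deriv \<nu> (\<lambda>x. \<delta> * (\<phi> x + \<epsilon>) powr \<tau>) x (\<delta> * (\<tau> * \<epsilon> powr (\<tau> - 1)) * d)" .
  have "\<delta> * (\<tau> * \<epsilon> powr (\<tau> - 1)) * (- d) \<le> \<delta> * (\<tau> * \<epsilon> powr (\<tau> - 1)) * c"
    using assms(3-6) by (intro mult_left_mono) auto
  also have "\<dots> \<le> lam * (\<delta> * (\<phi> x + \<epsilon>) powr \<tau>) powr q"
    using small assms(2,5,6) by (simp add: powr_mult powr_powr mult_ac)
  finally show "- lam * (\<delta> * (\<phi> x + \<epsilon>) powr \<tau>) powr q \<le> \<delta> * (\<tau> * \<epsilon> powr (\<tau> - 1)) * d"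
    by simp
qed

lemma powr_shift_supersolution:
  fixes \<Omega> :: "(real^'n::finite) set" and \<phi> :: "real^'n \<Rightarrow> real"
  assumes "open \<Omega>" and C2: "C2_on \<Omega> \<phi>" and cont: "continuous_on (closure \<Omega>) \<phi>"
    and pos: "\<forall>x\<in>\<Omega>. \<phi> x > 0" and bdry: "\<forall>x\<in>frontier \<Omega>. \<phi> x = 0"
    and eig: "\<forall>x\<in>\<Omega>. - laplacian \<phi> x = \<beta> * \<phi> x"
    and normal: "\<forall>x\<in>frontier \<Omega>. \<exists>d. has_normal_deriv \<nu> \<phi> x d \<and> - d \<le> c"
    and "0 < \<tau>" "0 < \<epsilon>" "0 < lam" "q < 1"
    and key: "\<forall>y\<in>\<Omega>. (\<phi> y + \<epsilon>)\<^sup>2 \<le> \<tau> * (1 - \<tau>) * (norm (grad \<phi> y))\<^sup>2 + \<tau> * \<beta> * \<phi> y * (\<phi> y + \<epsilon>)"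
  shows "\<exists>\<delta>1>0. \<forall>\<delta>. 0 < \<delta> \<and> \<delta> \<le> \<delta>1 \<longrightarrow> supersolution \<Omega> \<nu> lam p q (\<lambda>x. \<delta> * (\<phi> x + \<epsilon>) powr \<tau>)"
proof -
  have shift_pos: "\<forall>x\<in>\<Omega>. \<phi> x + \<epsilon> > 0" using pos \<open>0 < \<epsilon>\<close> by (simp add: add_pos_pos)
  have nonneg: "\<forall>x\<in>closure \<Omega>. \<phi> x \<ge> 0"
    using pos bdry closure_Un_frontier by (metis Un_iff less_imp_le order_refl)
  obtain \<delta>1 where "\<delta>1 > 0" and \<delta>1: "\<And>\<delta>. 0 < \<delta> \<Longrightarrow> \<delta> \<le> \<delta>1 \<Longrightarrow>
      \<tau> * \<epsilon> powr (\<tau> - 1) * c * \<delta> \<le> lam * \<epsilon> powr (\<tau> * q) * \<delta> powr q"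
    using linear_le_powr_near_0[of "lam * \<epsilon> powr (\<tau> * q)" q "\<tau> * \<epsilon> powr (\<tau> - 1) * c"] \<open>0 < lam\<close> \<open>0 < \<epsilon>\<close> \<open>q < 1\<close> by auto
  have "supersolution \<Omega> \<nu> lam p q (\<lambda>x. \<delta> * (\<phi> x + \<epsilon>) powr \<tau>)" if \<delta>: "0 < \<delta>" "\<delta> \<le> \<delta>1" for \<delta>
    unfolding supersolution_def
  proof (intro conjI ballI)
    show "C2_on \<Omega> (\<lambda>x. \<delta> * (\<phi> x + \<epsilon>) powr \<tau>)" by (rule C2_on_powr_shift[OF \<open>open \<Omega>\<close> C2 shift_pos])
    show "continuous_on (closure \<Omega>) (\<lambda>x. \<delta> * (\<phi> x + \<epsilon>) powr \<tau>)"
      using nonneg \<open>0 < \<epsilon>\<close> by (intro continuous_intros cont) (auto simp: add_nonneg_pos)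
    fix x
    assume "x \<in> \<Omega>"
    have "\<delta> * (\<phi> x + \<epsilon>) powr \<tau> \<le> - laplacian (\<lambda>x. \<delta> * (\<phi> x + \<epsilon>) powr \<tau>) x"
      using eig key \<open>x \<in> \<Omega>\<close> \<delta>
      by (intro powr_shift_le_minus_laplacian[OF \<open>open \<Omega>\<close> C2 shift_pos]) auto
    then show "\<delta> * (\<phi> x + \<epsilon>) powr \<tau> - (\<delta> * (\<phi> x + \<epsilon>) powr \<tau>) powr p
               \<le> - laplacian (\<lambda>x. \<delta> * (\<phi> x + \<epsilon>) powr \<tau>) x"
      by (smt (verit) powr_ge_zero)
  next
    fix x
    assume "x \<in> frontier \<Omega>"
    then obtain d where "has_normal_deriv \<nu> \<phi> x d" "- d \<le> c" "\<phi> x = 0"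
      using normal bdry by blast
    then show "\<exists>d. has_normal_deriv \<nu> (\<lambda>x. \<delta> * (\<phi> x + \<epsilon>) powr \<tau>) x d \<and>
        - lam * (\<delta> * (\<phi> x + \<epsilon>) powr \<tau>) powr q \<le> d"
      using \<delta>1[OF \<delta>] \<delta> \<open>0 < \<tau>\<close> \<open>0 < \<epsilon>\<close> by (intro powr_shift_normal_deriv_ge) auto
  qed
  with \<open>\<delta>1 > 0\<close> show ?thesis by blast
qed

theorem theorem5p1:
  fixes \<Omega> :: "(real^'n::finite) set" and \<nu> :: "real^'n \<Rightarrow> real^'n"
    and \<phi> :: "real^'n \<Rightarrow> real" and \<beta> \<theta> lam p q \<tau> :: real
  assumes dom: "smooth_domain \<Omega> \<nu>"
    and pq: "0 < q" "q < 1" "1 < p"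
    and beta: "smallest_dirichlet_eigenvalue \<Omega> \<beta>"
    and theta: "0 < \<theta>" "\<theta> < 1"
    and phi_reg: "C2_theta_closure \<theta> \<Omega> \<phi>"
    and phi_eig: "\<forall>x\<in>\<Omega>. - laplacian \<phi> x = \<beta> * \<phi> x"
    and phi_pos: "\<forall>x\<in>\<Omega>. \<phi> x > 0"
    and phi_bdry: "\<forall>x\<in>frontier \<Omega>. \<phi> x = 0"
    and phi_normal: "\<exists>c1 c2. 0 < c1 \<and> c1 \<le> c2 \<and>
        (\<forall>x\<in>frontier \<Omega>. \<exists>d. has_normal_deriv \<nu> \<phi> x d \<and> c1 \<le> - d \<and> - d \<le> c2)"
    and beta_gt: "\<beta> > 1"
    and lam: "lam > 0"
    and tau: "1 / \<beta> < \<tau>" "\<tau> < 1"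
  shows "\<exists>\<epsilon>0>0. \<forall>\<epsilon>. 0 < \<epsilon> \<and> \<epsilon> \<le> \<epsilon>0 \<longrightarrow>
           (\<exists>\<delta>1>0. \<forall>\<delta>. 0 < \<delta> \<and> \<delta> \<le> \<delta>1 \<longrightarrow>
              supersolution \<Omega> \<nu> lam p q (\<lambda>x. \<delta> * (\<phi> x + \<epsilon>) powr \<tau>))"
proof -
  have "open \<Omega>" using dom by (simp add: smooth_domain_def)
  have C2: "C2_on \<Omega> \<phi>" and cont: "continuous_on (closure \<Omega>) \<phi>"
    and uc: "\<forall>i. uniformly_continuous_on \<Omega> (partial i \<phi>)"
    using phi_reg unfolding C2_theta_closure_def by auto
  obtain c1 c2 where "0 < c1"
    and normal: "\<forall>x\<in>frontier \<Omega>. \<exists>d. has_normal_deriv \<nu> \<phi> x d \<and> c1 \<le> - d \<and> - d \<le> c2"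
    using phi_normal by blast
  then have "\<forall>x\<in>frontier \<Omega>. \<exists>d. has_normal_deriv \<nu> \<phi> x d \<and> d \<noteq> 0" by force
  then obtain \<eta> c where "\<eta> > 0" "c > 0" and grad_lb: "\<forall>y\<in>\<Omega>. \<phi> y < \<eta> \<longrightarrow> c \<le> norm (grad \<phi> y)"
    using grad_bounded_below_near_boundary[OF dom _ _ cont uc phi_pos] C2 unfolding C2_on_def by blast
  have "0 < \<tau>" using tau(1) beta_gt by (smt (verit) zero_less_divide_1_iff)
  have "\<tau> * \<beta> > 1" using tau(1) beta_gt by (simp add: divide_less_eq mult.commute)
  obtain \<epsilon>0 where "\<epsilon>0 > 0" and square_le: "\<forall>\<epsilon> f S. 0 < \<epsilon> \<and> \<epsilon> \<le> \<epsilon>0 \<and> 0 < f \<and> 0 \<le> S \<and>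
      (f < \<eta> \<longrightarrow> c\<^sup>2 \<le> S) \<longrightarrow> (f + \<epsilon>)\<^sup>2 \<le> \<tau> * (1 - \<tau>) * S + \<tau> * \<beta> * f * (f + \<epsilon>)"
    using small_shift_square_le[OF \<open>0 < \<tau>\<close> tau(2) \<open>\<tau> * \<beta> > 1\<close> \<open>\<eta> > 0\<close>, of "c\<^sup>2"] \<open>c > 0\<close> by auto
  have "\<exists>\<delta>1>0. \<forall>\<delta>. 0 < \<delta> \<and> \<delta> \<le> \<delta>1 \<longrightarrow> supersolution \<Omega> \<nu> lam p q (\<lambda>x. \<delta> * (\<phi> x + \<epsilon>) powr \<tau>)"
    if "0 < \<epsilon>" "\<epsilon> \<le> \<epsilon>0" for \<epsilon>
  proof (rule powr_shift_supersolution[OF \<open>open \<Omega>\<close> C2 cont phi_pos phi_bdry phi_eig _ \<open>0 < \<tau>\<close> that(1) lam pq(2)])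
    show "\<forall>x\<in>frontier \<Omega>. \<exists>d. has_normal_deriv \<nu> \<phi> x d \<and> - d \<le> c2" using normal by blast
    show "\<forall>y\<in>\<Omega>. (\<phi> y + \<epsilon>)\<^sup>2 \<le> \<tau> * (1 - \<tau>) * (norm (grad \<phi> y))\<^sup>2 + \<tau> * \<beta> * \<phi> y * (\<phi> y + \<epsilon>)"
      using square_le that phi_pos grad_lb \<open>c > 0\<close> by (simp add: power_mono)
  qed
  with \<open>\<epsilon>0 > 0\<close> show ?thesis by blast
qed

end
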